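(* Let $m,k,n\ge 1$ be integers; let $\lambda_i,\mu_i>0$ for $i\in\{1,\dots,k\}$ and $\alpha_j,\beta_j,u_j,v_j>0$ for $j\in\{1,\dots,n\}$; and let $\theta:\{0,\dots,m\}\to\mathbb{R}$ satisfy $0\le\theta(b)\le 1$ for all $b$, $\theta(b)>0$ for $b\in\{0,\dots,m-1\}$, and $\theta(m)=0$. Let $\mathcal{S}$ be the set of vectors $w=(x;a)=(x_1,\dots,x_k;a_1,\dots,a_n)$ with $x_i\in\mathbb{Z}_{\ge0}$, $a_j\in\{I,W,T\}$, and $\mathrm{busy}(w):=\sum_{i=1}^k x_i+\sum_{j=1}^n 1_{\{a_j=T\}}\le m$. Consider the CTMC on $\mathcal{S}$ whose only nonzero transition rates between states in $\mathcal{S}$ are: (i) $(x;a)\to(x+e_i;a)$ with rate $\lambda_i\theta(\mathrm{busy}(x;a))$ and $(x+e_i;a)\to(x;a)$ with rate $(x_i+1)\mu_i$, for each $i\in\{1,\dots,k\}$ ($e_i$ the $i$-th unit vector of length $k$); (ii) for each $j\in\{1,\dots,n\}$, changing only coordinate $a_j$: $I\to W$ with rate $\alpha_j$, $W\to I$ with rate $\beta_j$, $W\to T$ with rate $u_j\theta(\mathrm{busy}(w))$ where $w$ is the state before the transition, and $T\to W$ with rate $v_j$. Let $\rho_i=\lambda_i/\mu_i$. Then this CTMC is reversible and its steady state distribution is $$p(w)=B\cdot\Big(\prod_{r=0}^{\mathrm{busy}(w)-1}\theta(r)\Big)\Big(\prod_{i=1}^k\frac{\rho_i^{x_i}}{x_i!}\Big)\prod_{j=1}^n\Big(\frac{\alpha_j}{\beta_j}\Big)^{1_{\{a_j=W\}}}\Big(\frac{\alpha_ju_j}{\beta_jv_j}\Big)^{1_{\{a_j=T\}}}\qquad\forall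 w\in\mathcal{S},$$ where $B$ is the constant making the probabilities sum to $1$ and $\prod_{r=0}^{-1}\theta(r)=1$.
   Context: This models an access point with $m$ channels, $k$ classes of non-persistent users ($x_i$ = number of class $i$ users transmitting) and $n$ persistent users, each in activity state Idle ($I$), Waiting ($W$) or Transmitting ($T$); an access attempt made when $b$ channels are busy succeeds with probability $\theta(b)$. A CTMC is reversible if there is a probability mass function $p$ with $p(w)q_{w,z}=p(z)q_{z,w}$ for all states $w,z$. *)

theory Defs
  imports Complex_Main
begin

datatype act = Idle | Waiting | Transmitting

text \<open>A state w = (x; a): x i is the number of transmitting class-i users (i in 1..k),
  a j the activity of persistent user j (j in 1..n). Outside these index ranges the
  components are fixed to 0 resp. Idle, so that states are canonical.\<close>
type_synonym state = "(nat \<Rightarrow> nat) \<times> (nat \<Rightarrow> act)"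

definition busy :: "nat \<Rightarrow> nat \<Rightarrow> state \<Rightarrow> nat" where
  "busy k n w = (\<Sum>i=1..k. fst w i) + card {j\<in>{1..n}. snd w j = Transmitting}"

definition states :: "nat \<Rightarrow> nat \<Rightarrow> nat \<Rightarrow> state set" where
  "states m k n = {w. (\<forall>i. i \<notin> {1..k} \<longrightarrow> fst w i = 0) \<and>
                      (\<forall>j. j \<notin> {1..n} \<longrightarrow> snd w j = Idle) \<and> busy k n w \<le> m}"

definition up :: "nat \<Rightarrow> state \<Rightarrow> state" where
  "up i w = ((fst w)(i := fst w i + 1), snd w)"

definition setact :: "nat \<Rightarrow> act \<Rightarrow> state \<Rightarrow> state" where
  "setact j c w = (fst w, (snd w)(j := c))"

text \<open>Off-diagonal transition rate from w to z (only meaningful for w \<noteq> z).\<close>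
definition rate ::
  "nat \<Rightarrow> nat \<Rightarrow> (nat \<Rightarrow> real) \<Rightarrow> (nat \<Rightarrow> real) \<Rightarrow> (nat \<Rightarrow> real) \<Rightarrow> (nat \<Rightarrow> real) \<Rightarrow>
   (nat \<Rightarrow> real) \<Rightarrow> (nat \<Rightarrow> real) \<Rightarrow> (nat \<Rightarrow> real) \<Rightarrow> state \<Rightarrow> state \<Rightarrow> real" where
  "rate k n theta lam mu alpha beta u v w z =
     (\<Sum>i=1..k. (if z = up i w then lam i * theta (busy k n w) else 0)
              + (if w = up i z then real (fst w i) * mu i else 0))
   + (\<Sum>j=1..n.
        (if snd w j = Idle \<and> z = setact j Waiting w then alpha j else 0)
      + (if snd w j = Waiting \<and> z = setact j Idle w then beta j else 0)
      + (if snd w j = Waiting \<and> z = setact j Transmitting w then u j * theta (busy k n w) else 0)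
      + (if snd w j = Transmitting \<and> z = setact j Waiting w then v j else 0))"

definition is_pmf_on :: "'s set \<Rightarrow> ('s \<Rightarrow> real) \<Rightarrow> bool" where
  "is_pmf_on S p \<longleftrightarrow> (\<forall>w\<in>S. 0 \<le> p w) \<and> (\<Sum>w\<in>S. p w) = 1"

definition detailed_balance :: "'s set \<Rightarrow> ('s \<Rightarrow> 's \<Rightarrow> real) \<Rightarrow> ('s \<Rightarrow> real) \<Rightarrow> bool" where
  "detailed_balance S q p \<longleftrightarrow> (\<forall>w\<in>S. \<forall>z\<in>S. p w * q w z = p z * q z w)"

definition reversible_ctmc :: "'s set \<Rightarrow> ('s \<Rightarrow> 's \<Rightarrow> real) \<Rightarrow> bool" where
  "reversible_ctmc S q \<longleftrightarrow> (\<exists>p. is_pmf_on S p \<and> detailed_balance S q p)"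

definition stationary_dist :: "'s set \<Rightarrow> ('s \<Rightarrow> 's \<Rightarrow> real) \<Rightarrow> ('s \<Rightarrow> real) \<Rightarrow> bool" where
  "stationary_dist S q p \<longleftrightarrow> is_pmf_on S p \<and>
     (\<forall>z\<in>S. (\<Sum>w\<in>S-{z}. p w * q w z) = p z * (\<Sum>y\<in>S-{z}. q z y))"

definition weight ::
  "nat \<Rightarrow> nat \<Rightarrow> (nat \<Rightarrow> real) \<Rightarrow> (nat \<Rightarrow> real) \<Rightarrow> (nat \<Rightarrow> real) \<Rightarrow> (nat \<Rightarrow> real) \<Rightarrow>
   (nat \<Rightarrow> real) \<Rightarrow> (nat \<Rightarrow> real) \<Rightarrow> (nat \<Rightarrow> real) \<Rightarrow> state \<Rightarrow> real" where
  "weight k n theta lam mu alpha beta u v w =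
     (\<Prod>r<busy k n w. theta r)
   * (\<Prod>i=1..k. (lam i / mu i) ^ fst w i / fact (fst w i))
   * (\<Prod>j=1..n. (alpha j / beta j) ^ (if snd w j = Waiting then 1 else 0)
               * ((alpha j * u j) / (beta j * v j)) ^ (if snd w j = Transmitting then 1 else 0))"

end

theory Submission
  imports Defs
begin

(* The product-form weight W balances every pair of opposite transitions: a class-i
   arrival against the corresponding departure, and each I <-> W and W <-> T move of a
   persistent user. In each pair W changes by exactly the ratio of the two rates, the
   factor theta(busy w) of an access attempt being absorbed by the product of theta(r)
   over r < busy. Normalising W therefore gives a distribution in detailed balance.
   For uniqueness, every state reaches the empty state by departures and deactivations
   of positive rate, and detailed balance makes positive rates symmetric. If pi is
   stationary and z maximises h = pi / p, global balance at z becomes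
   sum_x p(x) q(x,z) (h z - h x) = 0, a sum of nonnegative terms, so the maximum
   spreads along positive rates to all states. *)

lemma sum_fun_upd:
  fixes g :: "'a \<Rightarrow> 'b \<Rightarrow> 'c::comm_monoid_add"
  assumes "finite A" "i \<in> A"
  shows "(\<Sum>x\<in>A. g x ((f(i := c)) x)) = g i c + (\<Sum>x\<in>A - {i}. g x (f x))"
proof -
  have "(\<Sum>x\<in>A - {i}. g x ((f(i := c)) x)) = (\<Sum>x\<in>A - {i}. g x (f x))"
    by (rule sum.cong) auto
  then show ?thesis using sum.remove[OF assms, of "\<lambda>x. g x ((f(i := c)) x)"] by simp
qed

lemma prod_fun_upd:
  fixes g :: "'a \<Rightarrow> 'b \<Rightarrow> 'c::comm_monoid_mult"
  assumes "finite A" "i \<in> A"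
  shows "(\<Prod>x\<in>A. g x ((f(i := c)) x)) = g i c * (\<Prod>x\<in>A - {i}. g x (f x))"
proof -
  have "(\<Prod>x\<in>A - {i}. g x ((f(i := c)) x)) = (\<Prod>x\<in>A - {i}. g x (f x))"
    by (rule prod.cong) auto
  then show ?thesis using prod.remove[OF assms, of "\<lambda>x. g x ((f(i := c)) x)"] by simp
qed

definition rate_graph :: "'s set \<Rightarrow> ('s \<Rightarrow> 's \<Rightarrow> real) \<Rightarrow> ('s \<times> 's) set" where
  "rate_graph S q = {(w, z). w \<in> S \<and> z \<in> S \<and> 0 < q w z}"

lemma detailed_balance_imp_stationary:
  assumes "is_pmf_on S p" and "detailed_balance S q p"
  shows "stationary_dist S q p"
proof -
  have "(\<Sum>w\<in>S-{z}. p w * q w z) = p z * (\<Sum>y\<in>S-{z}. q z y)" if "z \<in> S" for z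
    using assms(2) that by (auto simp: detailed_balance_def sum_distrib_left intro: sum.cong)
  with assms(1) show ?thesis by (simp add: stationary_dist_def)
qed

lemma stationary_ratio_argmax:
  fixes q :: "'s \<Rightarrow> 's \<Rightarrow> real"
  assumes "finite S" and p_pos: "\<forall>w\<in>S. 0 < p w" and q_nonneg: "\<forall>w\<in>S. \<forall>z\<in>S. 0 \<le> q w z"
    and db: "detailed_balance S q p" and st: "stationary_dist S q \<pi>"
    and z: "z \<in> S" and max: "\<forall>x\<in>S. \<pi> x / p x \<le> \<pi> z / p z"
    and w: "w \<in> S" "0 < q w z"
  shows "\<pi> w / p w = \<pi> z / p z"
proof -
  define h where "h x = \<pi> x / p x" for x
  have \<pi>_eq: "\<pi> x = h x * p x" if "x \<in> S" for x
  proof -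
    have "p x \<noteq> 0" using p_pos that by fastforce
    then show ?thesis by (simp add: h_def)
  qed
  define f where "f x = p x * q x z * (h z - h x)" for x
  have "(\<Sum>x\<in>S-{z}. h x * (p x * q x z)) = (\<Sum>x\<in>S-{z}. \<pi> x * q x z)"
    by (rule sum.cong) (auto simp: \<pi>_eq)
  also have "\<dots> = \<pi> z * (\<Sum>y\<in>S-{z}. q z y)"
    using st z by (simp add: stationary_dist_def)
  also have "\<dots> = (\<Sum>x\<in>S-{z}. h z * (p x * q x z))"
    unfolding sum_distrib_left
  proof (rule sum.cong)
    fix x assume "x \<in> S - {z}"
    then have "p z * q z x = p x * q x z" using db z by (simp add: detailed_balance_def)
    then show "\<pi> z * q z x = h z * (p x * q x z)" by (simp add: \<pi>_eq[OF z])
  qed simp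
  finally have "(\<Sum>x\<in>S-{z}. h z * (p x * q x z) - h x * (p x * q x z)) = 0"
    by (simp add: sum_subtractf)
  then have "sum f (S - {z}) = 0"
    by (simp add: f_def algebra_simps)
  moreover have "0 \<le> f x" if "x \<in> S - {z}" for x
  proof -
    have "0 \<le> p x" "0 \<le> q x z" "h x \<le> h z"
      using that p_pos q_nonneg z max by (auto simp: h_def less_imp_le)
    then show ?thesis by (simp add: f_def)
  qed
  ultimately have "\<forall>x\<in>S-{z}. f x = 0"
    using sum_nonneg_eq_0_iff[of "S - {z}" f] \<open>finite S\<close> by simp
  then have "f w = 0" using w(1) by (cases "w = z") (simp_all add: f_def)
  moreover have "0 < p w * q w z" using p_pos w by simp
  ultimately have "h w = h z" unfolding f_def by (metis less_irrefl mult_eq_0_iff right_minus_eq)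
  then show ?thesis by (simp add: h_def)
qed

lemma stationary_dist_unique:
  fixes q :: "'s \<Rightarrow> 's \<Rightarrow> real"
  assumes fin: "finite S" and pmf: "is_pmf_on S p" and p_pos: "\<forall>w\<in>S. 0 < p w"
    and q_nonneg: "\<forall>w\<in>S. \<forall>z\<in>S. 0 \<le> q w z" and db: "detailed_balance S q p"
    and root: "z\<^sub>0 \<in> S" and reach: "\<forall>w\<in>S. (w, z\<^sub>0) \<in> (rate_graph S q)\<^sup>*"
    and st: "stationary_dist S q \<pi>"
  shows "\<forall>w\<in>S. \<pi> w = p w"
proof -
  define h where "h x = \<pi> x / p x" for x
  define M where "M = Max (h ` S)"
  have le_M: "\<forall>x\<in>S. h x \<le> M" using fin by (simp add: M_def)
  have "M \<in> h ` S" unfolding M_def using fin root by (intro Max_in) auto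
  then obtain z where z: "z \<in> S" "h z = M" by blast
  have argmax: "h y = M" if "x \<in> S" "h x = M" "y \<in> S" "0 < q y x" for x y
    using stationary_ratio_argmax[OF fin p_pos q_nonneg db st that(1) _ that(3,4)] le_M that(2)
    unfolding h_def by simp
  have edge: "h w = M \<longleftrightarrow> h y = M" if "(w, y) \<in> rate_graph S q" for w y
  proof -
    from that have w: "w \<in> S" and y: "y \<in> S" and wy: "0 < q w y"
      by (auto simp: rate_graph_def)
    have "0 < p y * q y w"
      using db w y wy p_pos by (metis detailed_balance_def mult_pos_pos)
    then have yw: "0 < q y w" using p_pos y zero_less_mult_pos by blast
    show ?thesis using argmax[of w y] argmax[of y w] w y wy yw by blast
  qed
  have path: "h w = M \<longleftrightarrow> h y = M" if "(w, y) \<in> (rate_graph S q)\<^sup>*" for w y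
    using that by (induction rule: rtrancl_induct) (simp_all add: edge)
  have \<pi>_eq: "\<pi> w = M * p w" if "w \<in> S" for w
  proof -
    have "h w = M" using path reach z that by blast
    moreover have "p w \<noteq> 0" using p_pos that by fastforce
    ultimately show ?thesis by (simp add: h_def field_simps)
  qed
  have "1 = (\<Sum>w\<in>S. \<pi> w)" using st by (simp add: stationary_dist_def is_pmf_on_def)
  also have "\<dots> = M * (\<Sum>w\<in>S. p w)" using \<pi>_eq by (simp add: sum_distrib_left)
  also have "\<dots> = M" using pmf by (simp add: is_pmf_on_def)
  finally show ?thesis using \<pi>_eq by simp
qed

lemma stationary_dist_iff_eq:
  fixes q :: "'s \<Rightarrow> 's \<Rightarrow> real"
  assumes "finite S" and pmf: "is_pmf_on S p" and "\<forall>w\<in>S. 0 < p w"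
    and "\<forall>w\<in>S. \<forall>z\<in>S. 0 \<le> q w z" and db: "detailed_balance S q p"
    and "z\<^sub>0 \<in> S" and "\<forall>w\<in>S. (w, z\<^sub>0) \<in> (rate_graph S q)\<^sup>*"
  shows "stationary_dist S q \<pi> \<longleftrightarrow> (\<forall>w\<in>S. \<pi> w = p w)"
proof
  show "stationary_dist S q \<pi> \<Longrightarrow> \<forall>w\<in>S. \<pi> w = p w"
    by (rule stationary_dist_unique[OF assms])
next
  assume eq: "\<forall>w\<in>S. \<pi> w = p w"
  then have "sum \<pi> S = sum p S" and "(\<Sum>w\<in>S-{z}. \<pi> w * q w z) = (\<Sum>w\<in>S-{z}. p w * q w z)" for z
    by (auto intro: sum.cong)
  with eq detailed_balance_imp_stationary[OF pmf db] show "stationary_dist S q \<pi>"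
    by (simp add: stationary_dist_def is_pmf_on_def)
qed

lemma normalize_pos_pmf:
  fixes f :: "'s \<Rightarrow> real"
  assumes "finite S" "S \<noteq> {}" "\<And>w. w \<in> S \<Longrightarrow> 0 < f w"
  shows "is_pmf_on S (\<lambda>w. 1 / (\<Sum>y\<in>S. f y) * f w)"
    and "\<forall>w\<in>S. 0 < 1 / (\<Sum>y\<in>S. f y) * f w"
proof -
  have "0 < (\<Sum>y\<in>S. f y)" using assms by (intro sum_pos) auto
  then show "\<forall>w\<in>S. 0 < 1 / (\<Sum>y\<in>S. f y) * f w" using assms(3) by simp
  with \<open>0 < (\<Sum>y\<in>S. f y)\<close> show "is_pmf_on S (\<lambda>w. 1 / (\<Sum>y\<in>S. f y) * f w)"
    by (simp add: is_pmf_on_def sum_divide_distrib[symmetric] less_imp_le)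
qed

lemma busy_eq:
  "busy k n w = (\<Sum>i=1..k. fst w i) + (\<Sum>j=1..n. of_bool (snd w j = Transmitting))"
  unfolding busy_def by (simp add: Int_def)

lemma busy_up: "i \<in> {1..k} \<Longrightarrow> busy k n (up i w) = Suc (busy k n w)"
  unfolding busy_eq up_def
  using sum_fun_upd[of "{1..k}" i "\<lambda>_ x. x" "fst w"] sum.remove[of "{1..k}" i "fst w"]
  by (simp del: fun_upd_apply)

lemma busy_setact:
  "j \<in> {1..n} \<Longrightarrow> busy k n (setact j c w) + of_bool (snd w j = Transmitting)
     = busy k n w + of_bool (c = Transmitting)"
  unfolding busy_eq setact_def
  using sum_fun_upd[of "{1..n}" j "\<lambda>_ a. of_bool (a = Transmitting) :: nat" "snd w"]
    sum.remove[of "{1..n}" j "\<lambda>j. of_bool (snd w j = Transmitting) :: nat"]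
  by (simp del: sum_of_bool_eq fun_upd_apply)

lemma setact_same: "setact j (snd w j) w = w"
  by (simp add: setact_def)

lemma setact_swap: "(snd w j = a \<and> z = setact j b w) \<longleftrightarrow> (snd z j = b \<and> w = setact j a z)"
  by (cases w; cases z) (auto simp: setact_def fun_eq_iff)

definition empty_state :: state where
  "empty_state = (\<lambda>_. 0, \<lambda>_. Idle)"

lemma empty_state_in_states: "empty_state \<in> states m k n"
  by (simp add: empty_state_def states_def busy_def)

lemma finite_states: "finite (states m k n)"
proof -
  let ?F = "{f. \<forall>i. (i \<in> {1..k} \<longrightarrow> f i \<in> {0..m}) \<and> (i \<notin> {1..k} \<longrightarrow> f i = 0)}"
  let ?G = "{g. \<forall>j. (j \<in> {1..n} \<longrightarrow> g j \<in> UNIV) \<and> (j \<notin> {1..n} \<longrightarrow> g j = Idle)}"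
  have "finite (UNIV :: act set)"
    by (rule finite_subset[of _ "{Idle, Waiting, Transmitting}"]) (auto intro: act.exhaust)
  then have "finite (?F \<times> ?G)"
    by (intro finite_cartesian_product finite_set_of_finite_funs) auto
  moreover have "fst w i \<le> m" if "w \<in> states m k n" "i \<in> {1..k}" for w i
    using that member_le_sum[of i "{1..k}" "fst w"] by (auto simp: states_def busy_def)
  then have "states m k n \<subseteq> ?F \<times> ?G"
    by (auto simp: states_def mem_Times_iff)
  ultimately show ?thesis by (rule finite_subset[rotated])
qed

lemma up_in_statesD:
  assumes "up i y \<in> states m k n" and i: "i \<in> {1..k}"
  shows "y \<in> states m k n"
proof -
  have "fst y i' = fst (up i y) i'" if "i' \<noteq> i" for i'
    using that by (simp add: up_def)
  moreover have "snd y = snd (up i y)" by (simp add: up_def)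
  ultimately show ?thesis using assms busy_up[OF i, of n y] by (auto simp: states_def)
qed

lemma setact_in_states:
  assumes "w \<in> states m k n" "j \<in> {1..n}" "busy k n (setact j c w) \<le> m"
  shows "setact j c w \<in> states m k n"
  using assms by (auto simp: states_def setact_def)

fun act_level :: "act \<Rightarrow> nat" where
  "act_level Idle = 0"
| "act_level Waiting = 1"
| "act_level Transmitting = 2"

fun lower_act :: "act \<Rightarrow> act" where
  "lower_act Idle = Idle"
| "lower_act Waiting = Idle"
| "lower_act Transmitting = Waiting"

definition level :: "nat \<Rightarrow> nat \<Rightarrow> state \<Rightarrow> nat" where
  "level k n w = (\<Sum>i=1..k. fst w i) + (\<Sum>j=1..n. act_level (snd w j))"

lemma level_up: "i \<in> {1..k} \<Longrightarrow> level k n (up i w) = Suc (level k n w)"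
  unfolding level_def up_def
  using sum_fun_upd[of "{1..k}" i "\<lambda>_ x. x" "fst w"] sum.remove[of "{1..k}" i "fst w"]
  by (simp del: fun_upd_apply)

lemma level_setact:
  "j \<in> {1..n} \<Longrightarrow> level k n (setact j c w) + act_level (snd w j) = level k n w + act_level c"
  unfolding level_def setact_def
  using sum_fun_upd[of "{1..n}" j "\<lambda>_. act_level" "snd w"]
    sum.remove[of "{1..n}" j "\<lambda>j. act_level (snd w j)"]
  by (simp del: fun_upd_apply)

lemma state_not_empty_cases:
  assumes "w \<in> states m k n" "w \<noteq> empty_state"
  obtains (class_user) i where "i \<in> {1..k}" "0 < fst w i"
    | (persistent_user) j where "j \<in> {1..n}" "snd w j \<noteq> Idle"
proof -
  have "w = empty_state" if "\<forall>i\<in>{1..k}. fst w i = 0" "\<forall>j\<in>{1..n}. snd w j = Idle"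
  proof -
    have "fst w = (\<lambda>_. 0)" "snd w = (\<lambda>_. Idle)"
      using that assms(1) by (auto simp: states_def fun_eq_iff)
    then show ?thesis by (simp add: empty_state_def prod_eq_iff)
  qed
  with assms(2) that show ?thesis by (meson neq0_conv)
qed

locale access_point =
  fixes m k n :: nat and lam mu alpha beta u v theta :: "nat \<Rightarrow> real"
  assumes lam_pos: "i \<in> {1..k} \<Longrightarrow> 0 < lam i"
    and mu_pos: "i \<in> {1..k} \<Longrightarrow> 0 < mu i"
    and alpha_pos: "j \<in> {1..n} \<Longrightarrow> 0 < alpha j"
    and beta_pos: "j \<in> {1..n} \<Longrightarrow> 0 < beta j"
    and u_pos: "j \<in> {1..n} \<Longrightarrow> 0 < u j"
    and v_pos: "j \<in> {1..n} \<Longrightarrow> 0 < v j"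
    and theta_nonneg: "b \<le> m \<Longrightarrow> 0 \<le> theta b"
    and theta_pos: "b < m \<Longrightarrow> 0 < theta b"
begin

abbreviation W :: "state \<Rightarrow> real" where
  "W \<equiv> weight k n theta lam mu alpha beta u v"

abbreviation Q :: "state \<Rightarrow> state \<Rightarrow> real" where
  "Q \<equiv> rate k n theta lam mu alpha beta u v"

definition class_weight :: "nat \<Rightarrow> nat \<Rightarrow> real" where
  "class_weight i x = (lam i / mu i) ^ x / fact x"

definition user_weight :: "nat \<Rightarrow> act \<Rightarrow> real" where
  "user_weight j a = (case a of Idle \<Rightarrow> 1 | Waiting \<Rightarrow> alpha j / beta j
                              | Transmitting \<Rightarrow> alpha j * u j / (beta j * v j))"

lemma weight_eq:
  "W w = (\<Prod>r<busy k n w. theta r) * (\<Prod>i=1..k. class_weight i (fst w i))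
       * (\<Prod>j=1..n. user_weight j (snd w j))"
  unfolding weight_def class_weight_def user_weight_def
  by (intro arg_cong2[where f = "(*)"] prod.cong refl) (simp split: act.split)

lemma weight_pos:
  assumes "w \<in> states m k n"
  shows "0 < W w"
proof -
  have "busy k n w \<le> m" using assms by (simp add: states_def)
  then have "0 < (\<Prod>r<busy k n w. theta r)" by (intro prod_pos theta_pos) auto
  moreover have "0 < (\<Prod>i=1..k. class_weight i (fst w i))"
    by (intro prod_pos) (simp add: class_weight_def lam_pos mu_pos)
  moreover have "0 < (\<Prod>j=1..n. user_weight j (snd w j))"
    by (intro prod_pos)
       (simp add: user_weight_def alpha_pos beta_pos u_pos v_pos split: act.split)
  ultimately show ?thesis by (simp add: weight_eq)
qed

lemma weight_up:
  assumes i: "i \<in> {1..k}"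
  shows "W (up i w) * (real (fst w i + 1) * mu i) = W w * (lam i * theta (busy k n w))"
proof -
  let ?T = "\<Prod>r<busy k n w. theta r"
  let ?R = "\<Prod>i'\<in>{1..k} - {i}. class_weight i' (fst w i')"
  let ?J = "\<Prod>j=1..n. user_weight j (snd w j)"
  have "W (up i w) = (\<Prod>r<Suc (busy k n w). theta r)
      * (\<Prod>i'=1..k. class_weight i' (((fst w)(i := fst w i + 1)) i')) * ?J"
    unfolding weight_eq busy_up[OF i] by (simp add: up_def del: fun_upd_apply)
  also have "\<dots> = ?T * theta (busy k n w) * (class_weight i (fst w i + 1) * ?R) * ?J"
    unfolding prod_fun_upd[OF finite_atLeastAtMost i] by simp
  finally have "W (up i w) = ?T * theta (busy k n w) * (class_weight i (fst w i + 1) * ?R) * ?J" .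
  moreover have "W w = ?T * (class_weight i (fst w i) * ?R) * ?J"
    using prod.remove[of "{1..k}" i "\<lambda>i. class_weight i (fst w i)"] i by (simp add: weight_eq)
  moreover have "class_weight i (fst w i + 1) * (real (fst w i + 1) * mu i)
                 = class_weight i (fst w i) * lam i"
    using mu_pos[OF i] unfolding class_weight_def by (simp add: field_simps del: of_nat_Suc)
  ultimately show ?thesis by (simp add: ac_simps)
qed

lemma weight_setact:
  assumes "j \<in> {1..n}"
  shows "W (setact j c w) = (\<Prod>r<busy k n (setact j c w). theta r)
     * (\<Prod>i=1..k. class_weight i (fst w i))
     * (user_weight j c * (\<Prod>j'\<in>{1..n} - {j}. user_weight j' (snd w j')))"
  using prod_fun_upd[of "{1..n}" j user_weight "snd w" c] assms
  by (simp add: weight_eq setact_def del: fun_upd_apply)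

lemma weight_idle_waiting:
  assumes j: "j \<in> {1..n}" and idle: "snd w j = Idle"
  shows "W (setact j Waiting w) * beta j = W w * alpha j"
proof -
  have same: "setact j Idle w = w" using setact_same[of j w] idle by simp
  have "busy k n (setact j Waiting w) = busy k n w"
    using busy_setact[OF j, where c = Waiting and w = w and k = k] idle by simp
  then show ?thesis
    using weight_setact[OF j, of Waiting w] weight_setact[OF j, of Idle w, unfolded same]
      beta_pos[OF j]
    by (simp add: user_weight_def)
qed

lemma weight_waiting_transmitting:
  assumes j: "j \<in> {1..n}" and waiting: "snd w j = Waiting"
  shows "W (setact j Transmitting w) * v j = W w * (u j * theta (busy k n w))"
proof -
  have same: "setact j Waiting w = w" using setact_same[of j w] waiting by simp
  have "busy k n (setact j Transmitting w) = Suc (busy k n w)"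
    using busy_setact[OF j, where c = Transmitting and w = w and k = k] waiting by simp
  then show ?thesis
    using weight_setact[OF j, of Transmitting w] weight_setact[OF j, of Waiting w, unfolded same]
      beta_pos[OF j] v_pos[OF j]
    by (simp add: user_weight_def)
qed

definition class_rate :: "nat \<Rightarrow> state \<Rightarrow> state \<Rightarrow> real" where
  "class_rate i w z = (if z = up i w then lam i * theta (busy k n w) else 0)
                    + (if w = up i z then real (fst w i) * mu i else 0)"

definition user_rate :: "nat \<Rightarrow> state \<Rightarrow> state \<Rightarrow> real" where
  "user_rate j w z =
     (if snd w j = Idle \<and> z = setact j Waiting w then alpha j else 0)
   + (if snd w j = Waiting \<and> z = setact j Idle w then beta j else 0)
   + (if snd w j = Waiting \<and> z = setact j Transmitting w then u j * theta (busy k n w) else 0)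
   + (if snd w j = Transmitting \<and> z = setact j Waiting w then v j else 0)"

lemma rate_eq: "Q w z = (\<Sum>i=1..k. class_rate i w z) + (\<Sum>j=1..n. user_rate j w z)"
  unfolding rate_def class_rate_def user_rate_def ..

lemma class_rate_balance:
  assumes i: "i \<in> {1..k}"
  shows "W w * class_rate i w z = W z * class_rate i z w"
proof -
  have up: "W w * (if z = up i w then lam i * theta (busy k n w) else 0)
          = W z * (if z = up i w then real (fst z i) * mu i else 0)" for w z
    using weight_up[OF i, of w] by (simp add: up_def)
  show ?thesis
    using up[of w z] up[of z w] by (simp add: class_rate_def algebra_simps)
qed

lemma user_rate_balance:
  assumes j: "j \<in> {1..n}"
  shows "W w * user_rate j w z = W z * user_rate j z w"
proof -
  have idle_waiting:
    "W w * (if snd w j = Idle \<and> z = setact j Waiting w then alpha j else 0)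
   = W z * (if snd z j = Waiting \<and> w = setact j Idle z then beta j else 0)" for w z
    using weight_idle_waiting[OF j, of w] setact_swap[of w j Idle z Waiting] by auto
  have waiting_transmitting:
    "W w * (if snd w j = Waiting \<and> z = setact j Transmitting w then u j * theta (busy k n w) else 0)
   = W z * (if snd z j = Transmitting \<and> w = setact j Waiting z then v j else 0)" for w z
    using weight_waiting_transmitting[OF j, of w] setact_swap[of w j Waiting z Transmitting] by auto
  show ?thesis
    using idle_waiting[of w z] idle_waiting[of z w]
      waiting_transmitting[of w z] waiting_transmitting[of z w]
    by (simp add: user_rate_def algebra_simps)
qed

lemma weight_rate_balance: "W w * Q w z = W z * Q z w"
  unfolding rate_eq distrib_left sum_distrib_left
  using class_rate_balance user_rate_balance by simp

lemma class_rate_nonneg: "w \<in> states m k n \<Longrightarrow> i \<in> {1..k} \<Longrightarrow> 0 \<le> class_rate i w z"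
  using lam_pos mu_pos theta_nonneg[of "busy k n w"]
  by (simp add: class_rate_def states_def less_imp_le)

lemma user_rate_nonneg: "w \<in> states m k n \<Longrightarrow> j \<in> {1..n} \<Longrightarrow> 0 \<le> user_rate j w z"
  using alpha_pos beta_pos u_pos v_pos theta_nonneg[of "busy k n w"]
  by (simp add: user_rate_def states_def less_imp_le)

lemma rate_nonneg: "w \<in> states m k n \<Longrightarrow> 0 \<le> Q w z"
  unfolding rate_eq
  by (intro add_nonneg_nonneg sum_nonneg class_rate_nonneg user_rate_nonneg)

lemma rate_pos_class:
  assumes "w \<in> states m k n" "i \<in> {1..k}" "0 < class_rate i w z"
  shows "0 < Q w z"
  unfolding rate_eq using assms
  by (intro add_pos_nonneg sum_pos2[of _ i] sum_nonneg class_rate_nonneg user_rate_nonneg) auto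

lemma rate_pos_user:
  assumes "w \<in> states m k n" "j \<in> {1..n}" "0 < user_rate j w z"
  shows "0 < Q w z"
  unfolding rate_eq using assms
  by (intro add_nonneg_pos sum_pos2[of _ j] sum_nonneg class_rate_nonneg user_rate_nonneg) auto

lemma rate_departure_pos:
  assumes w: "up i y \<in> states m k n" and i: "i \<in> {1..k}"
  shows "0 < Q (up i y) y"
proof (rule rate_pos_class[OF w i])
  have "0 \<le> theta (busy k n (up i y))" using w by (simp add: states_def theta_nonneg)
  then have "0 \<le> lam i * theta (busy k n (up i y))" using lam_pos[OF i] by simp
  moreover have "0 < real (fst (up i y) i) * mu i" using mu_pos[OF i] by (simp add: up_def)
  ultimately show "0 < class_rate i (up i y) y" by (simp add: class_rate_def)
qed

lemma rate_lower_pos: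
  assumes w: "w \<in> states m k n" and j: "j \<in> {1..n}" and "snd w j \<noteq> Idle"
  shows "0 < Q w (setact j (lower_act (snd w j)) w)"
proof (rule rate_pos_user[OF w j])
  have "0 \<le> theta (busy k n w)" using w by (simp add: states_def theta_nonneg)
  then have "0 \<le> u j * theta (busy k n w)" using u_pos[OF j] by simp
  then show "0 < user_rate j w (setact j (lower_act (snd w j)) w)"
    using assms alpha_pos[OF j] beta_pos[OF j] v_pos[OF j]
    by (cases "snd w j") (simp_all add: user_rate_def setact_def)
qed

lemma rate_graph_descent:
  assumes w: "w \<in> states m k n" and "w \<noteq> empty_state"
  shows "\<exists>y. (w, y) \<in> rate_graph (states m k n) Q \<and> level k n y < level k n w"
  using assms
proof (cases rule: state_not_empty_cases)
  case (class_user i)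
  let ?y = "((fst w)(i := fst w i - 1), snd w)"
  have wy: "w = up i ?y" using class_user by (simp add: up_def)
  have "?y \<in> states m k n" using up_in_statesD[of i ?y] w wy class_user(1) by simp
  moreover have "0 < Q w ?y" using rate_departure_pos[of i ?y] w wy class_user(1) by simp
  moreover have "level k n ?y < level k n w" using level_up[OF class_user(1), of n ?y] wy by simp
  ultimately show ?thesis using w by (intro exI[of _ ?y]) (simp add: rate_graph_def)
next
  case (persistent_user j)
  let ?y = "setact j (lower_act (snd w j)) w"
  have "busy k n ?y \<le> busy k n w"
    using busy_setact[OF persistent_user(1), of k "lower_act (snd w j)" w]
    by (cases "snd w j") auto
  then have "?y \<in> states m k n"
    using setact_in_states[OF w persistent_user(1)] w by (auto simp: states_def)
  moreover have "level k n ?y < level k n w"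
    using level_setact[OF persistent_user(1), of k "lower_act (snd w j)" w] persistent_user(2)
    by (cases "snd w j") auto
  ultimately show ?thesis
    using rate_lower_pos[OF w persistent_user] w by (intro exI[of _ ?y]) (simp add: rate_graph_def)
qed

lemma states_reach_empty_state:
  "w \<in> states m k n \<Longrightarrow> (w, empty_state) \<in> (rate_graph (states m k n) Q)\<^sup>*"
proof (induction "level k n w" arbitrary: w rule: less_induct)
  case less
  show ?case
  proof (cases "w = empty_state")
    case False
    then obtain y where edge: "(w, y) \<in> rate_graph (states m k n) Q"
      and descent: "level k n y < level k n w"
      using rate_graph_descent less.prems by blast
    have "y \<in> states m k n" using edge by (simp add: rate_graph_def)
    with descent have "(y, empty_state) \<in> (rate_graph (states m k n) Q)\<^sup>*"
      by (rule less.hyps)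
    with edge show ?thesis by (rule converse_rtrancl_into_rtrancl)
  qed simp
qed

end

theorem theorem2:
  fixes m k n :: nat
    and lam mu alpha beta u v theta :: "nat \<Rightarrow> real"
  assumes "m \<ge> 1" "k \<ge> 1" "n \<ge> 1"
    and "\<forall>i\<in>{1..k}. lam i > 0 \<and> mu i > 0"
    and "\<forall>j\<in>{1..n}. alpha j > 0 \<and> beta j > 0 \<and> u j > 0 \<and> v j > 0"
    and "\<forall>b\<in>{0..m}. 0 \<le> theta b \<and> theta b \<le> 1"
    and "\<forall>b\<in>{0..<m}. theta b > 0"
    and "theta m = 0"
  defines "S \<equiv> states m k n"
    and "q \<equiv> rate k n theta lam mu alpha beta u v"
    and "p \<equiv> (\<lambda>w. (1 / (\<Sum>y\<in>states m k n. weight k n theta lam mu alpha beta u v y))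
                      * weight k n theta lam mu alpha beta u v w)"
  shows "reversible_ctmc S q \<and> is_pmf_on S p \<and> detailed_balance S q p
         \<and> (\<forall>\<pi>. stationary_dist S q \<pi> \<longleftrightarrow> (\<forall>w\<in>S. \<pi> w = p w))"
proof -
  interpret access_point m k n lam mu alpha beta u v theta
    using assms(4-7) by unfold_locales auto
  have "states m k n \<noteq> {}" using empty_state_in_states by blast
  from normalize_pos_pmf[of "states m k n" W, OF finite_states this weight_pos]
  have "is_pmf_on S p" and "\<forall>w\<in>S. 0 < p w" unfolding S_def p_def by simp_all
  moreover have "detailed_balance S q p"
    unfolding detailed_balance_def p_def q_def using weight_rate_balance by (simp add: mult.assoc)
  moreover have "stationary_dist S q \<pi> \<longleftrightarrow> (\<forall>w\<in>S. \<pi> w = p w)" for \<pi>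
    using calculation finite_states rate_nonneg empty_state_in_states states_reach_empty_state
    unfolding S_def q_def by (intro stationary_dist_iff_eq) auto
  ultimately show ?thesis unfolding reversible_ctmc_def by blast
qed

end
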